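(* Let $A,H,B,K$ be logically independent events. Then (i) every $(x,y)\in[0,1]^2$ is a coherent assessment on $\{A|H,B|K\}$; (ii) for such $(x,y)$, $z$ is a coherent extension to the quasi disjunction $\mathcal D(A|H,B|K)=(AH\vee BK)|(H\vee K)$ if and only if $z\in[l,u]$, where $$l=T_0^H(x,y)=\begin{cases}\frac{xy}{x+y-xy},&(x,y)\ne(0,0),\\0,&(x,y)=(0,0),\end{cases}\qquad u=S_L(x,y)=\min(x+y,1).$$ *)

theory Defs
  imports Main "HOL-Library.Indicator_Function"
begin

text \<open>Events are subsets of a space of possible worlds 'w. A conditional event
  E|H is the pair (E, H).\<close>

definition logically_independent :: "'w set list \<Rightarrow> bool" where
  "logically_independent Es \<longleftrightarrow>
     (\<forall>bs::bool list. length bs = length Es \<longrightarrow>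
        (\<exists>\<omega>. \<forall>i<length Es. (\<omega> \<in> Es ! i \<longleftrightarrow> bs ! i)))"

definition gain :: "('w set \<times> 'w set) list \<Rightarrow> real list \<Rightarrow> (nat \<Rightarrow> real) \<Rightarrow> 'w \<Rightarrow> real" where
  "gain F p s \<omega> = (\<Sum>i<length F. s i * indicator (snd (F ! i)) \<omega> *
                        (indicator (fst (F ! i)) \<omega> - p ! i))"

definition coherent :: "('w set \<times> 'w set) list \<Rightarrow> real list \<Rightarrow> bool" where
  "coherent F p \<longleftrightarrow> length p = length F \<and>
     (\<forall>s. (\<exists>\<omega>\<in>\<Union>(snd ` set F). gain F p s \<omega> \<le> 0) \<and>
          (\<exists>\<omega>\<in>\<Union>(snd ` set F). gain F p s \<omega> \<ge> 0))"

definition quasi_disj :: "'w set \<times> 'w set \<Rightarrow> 'w set \<times> 'w set \<Rightarrow> 'w set \<times> 'w set" where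
  "quasi_disj AH BK = ((fst AH \<inter> snd AH) \<union> (fst BK \<inter> snd BK), snd AH \<union> snd BK)"

definition T0H :: "real \<Rightarrow> real \<Rightarrow> real" where
  "T0H x y = (if x = 0 \<and> y = 0 then 0 else x * y / (x + y - x * y))"

definition SL :: "real \<Rightarrow> real \<Rightarrow> real" where
  "SL x y = min (x + y) 1"

end

theory Submission
  imports Defs
begin

text \<open>
  An assessment is coherent as soon as it is the family of conditional weights
  P(E_i H_i) / P(H_i) of some nonnegative weighting of finitely many worlds in
  H_0: the weighted sum of the gains then vanishes for every choice of stakes, so the
  gain cannot have constant sign on H_0. Logical independence provides a world in
  every constituent, and suitable weightings realise both z = S_L(x, y) and
  z = T_0^H(x, y). Since the gain is affine in each component of the
  assessment, the coherent values of z form an interval, so all of [l, u] is coherent.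
  Conversely, the stakes (1, 1, -1) and (-y, -x, x + y - xy) give gains bounded below on
  H \<union> K by z - x - y and by xy - (x + y - xy) z, so coherence forces z \<le> x + y and
  z \<ge> T_0^H(x, y); the bounds 0 \<le> z \<le> 1 come from betting on the
  quasi disjunction alone, whose conditioning event is all of H \<union> K. Dropping the
  quasi disjunction from a coherent assessment adds no worlds to H_0, which gives (i).
\<close>

lemma gain_Nil: "gain [] p s \<omega> = 0"
  by (simp add: gain_def)

lemma gain_Cons:
  "gain ((E, H) # F) (c # p) s \<omega> =
     s 0 * indicator H \<omega> * (indicator E \<omega> - c) + gain F p (\<lambda>i. s (Suc i)) \<omega>"
  unfolding gain_def length_Cons sum.lessThan_Suc_shift by simp

lemma gain_uminus: "gain F p (\<lambda>i. - s i) \<omega> = - gain F p s \<omega>"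
  by (simp add: gain_def sum_negf)

lemma gain_list_update:
  assumes "k < length F" "k < length p"
  shows "gain F (p[k := t]) s \<omega> = gain F p s \<omega> + s k * indicator (snd (F ! k)) \<omega> * (p ! k - t)"
proof -
  have "gain F (p[k := t]) s \<omega> - gain F p s \<omega> =
      (\<Sum>i<length F. if i = k then s k * indicator (snd (F ! k)) \<omega> * (p ! k - t) else 0)"
    unfolding gain_def sum_subtractf[symmetric]
    by (intro sum.cong) (auto simp: assms nth_list_update algebra_simps)
  then show ?thesis
    using assms(1) by simp
qed

lemma gain_single_stake:
  assumes "i < length F"
  shows "gain F p (\<lambda>j. if j = i then c else 0) \<omega> =
    c * indicator (snd (F ! i)) \<omega> * (indicator (fst (F ! i)) \<omega> - p ! i)"
proof -
  have "gain F p (\<lambda>j. if j = i then c else 0) \<omega> = (\<Sum>j<length F. if j = i then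
      c * indicator (snd (F ! i)) \<omega> * (indicator (fst (F ! i)) \<omega> - p ! i) else 0)"
    unfolding gain_def by (intro sum.cong) auto
  with assms show ?thesis by simp
qed

lemma gain_append:
  assumes "length p = length F"
  shows "gain (F @ [G]) (p @ [c]) (\<lambda>i. if i < length F then s i else 0) \<omega> = gain F p s \<omega>"
  using assms by (simp add: gain_def nth_append)

lemma coherent_iff_nonpositive_gain:
  "coherent F p \<longleftrightarrow> length p = length F \<and> (\<forall>s. \<exists>\<omega>\<in>\<Union>(snd ` set F). gain F p s \<omega> \<le> 0)"
  unfolding coherent_def
  by (metis gain_uminus neg_le_0_iff_le)

lemma coherentI_weighted:
  fixes \<omega> :: "'i \<Rightarrow> 'w" and q :: "'i \<Rightarrow> real"
  assumes "length p = length F" and "finite I" and "\<omega> ` I \<subseteq> \<Union>(snd ` set F)"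
    and "\<And>j. j \<in> I \<Longrightarrow> 0 \<le> q j" and "0 < sum q I"
    and "\<And>i. i < length F \<Longrightarrow>
      (\<Sum>j\<in>I. q j * indicator (fst (F ! i) \<inter> snd (F ! i)) (\<omega> j)) =
      p ! i * (\<Sum>j\<in>I. q j * indicator (snd (F ! i)) (\<omega> j))"
  shows "coherent F p"
  unfolding coherent_iff_nonpositive_gain
proof (intro conjI allI)
  fix s
  have balanced: "(\<Sum>j\<in>I. q j * gain F p s (\<omega> j)) = 0"
  proof -
    have "(\<Sum>j\<in>I. q j * gain F p s (\<omega> j)) =
        (\<Sum>i<length F. s i * ((\<Sum>j\<in>I. q j * indicator (fst (F ! i) \<inter> snd (F ! i)) (\<omega> j)) -
           p ! i * (\<Sum>j\<in>I. q j * indicator (snd (F ! i)) (\<omega> j))))"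
      unfolding gain_def sum_distrib_left sum_subtractf
      by (subst sum.swap) (simp add: indicator_inter_arith algebra_simps sum_distrib_left sum_subtractf)
    also have "\<dots> = 0"
      using assms(6) by simp
    finally show ?thesis .
  qed
  show "\<exists>\<omega>\<in>\<Union>(snd ` set F). gain F p s \<omega> \<le> 0"
  proof (rule ccontr)
    assume "\<not> ?thesis"
    then have gain_pos: "0 < gain F p s (\<omega> j)" if "j \<in> I" for j
      using assms(3) that by force
    obtain j where "j \<in> I" "0 < q j"
      using assms(5) sum_nonpos[of I q] by (meson not_le)
    then have "0 < (\<Sum>j\<in>I. q j * gain F p s (\<omega> j))"
      using assms(2,4) gain_pos by (intro sum_pos2) (auto intro: mult_nonneg_nonneg less_imp_le)
    with balanced show False
      by simp
  qed
qed (fact assms(1))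

lemma coherent_list_update_between:
  assumes coh_a: "coherent F (p[k := a])" and coh_b: "coherent F (p[k := b])"
    and "a \<le> t" "t \<le> b"
  shows "coherent F (p[k := t])"
proof -
  have len: "length p = length F"
    using coh_a by (simp add: coherent_def)
  show ?thesis
  proof (cases "k < length F")
    case False
    with coh_a len show ?thesis
      by (simp add: list_update_beyond)
  next
    case True
    show ?thesis
      unfolding coherent_iff_nonpositive_gain
    proof (intro conjI allI)
      fix s
      obtain c where coh_c: "coherent F (p[k := c])" and "s k * (c - t) \<le> 0"
      proof (cases "0 \<le> s k")
        case True
        with coh_a \<open>a \<le> t\<close> show ?thesis
          by (intro that[of a]) (auto intro: mult_nonneg_nonpos)
      next
        case False
        with coh_b \<open>t \<le> b\<close> show ?thesis
          by (intro that[of b]) (auto intro: mult_nonpos_nonneg)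
      qed
      then have shift: "gain F (p[k := t]) s \<omega> \<le> gain F (p[k := c]) s \<omega>" for \<omega>
        using gain_list_update[of k F "p[k := c]" t s \<omega>] True len
        by (auto simp: mult.assoc mult_nonneg_nonpos mult.left_commute[of "s k"])
      from coh_c obtain \<omega> where "\<omega> \<in> \<Union>(snd ` set F)" "gain F (p[k := c]) s \<omega> \<le> 0"
        unfolding coherent_iff_nonpositive_gain by blast
      with shift show "\<exists>\<omega>\<in>\<Union>(snd ` set F). gain F (p[k := t]) s \<omega> \<le> 0"
        by (meson order_trans)
    qed (simp add: len)
  qed
qed

lemma coherent_append_covered:
  assumes coh: "coherent (F @ [G]) (p @ [c])" and "snd G \<subseteq> \<Union>(snd ` set F)"
  shows "coherent F p"
  unfolding coherent_iff_nonpositive_gain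
proof (intro conjI allI)
  show len: "length p = length F"
    using coh by (simp add: coherent_def)
  fix s
  have "\<Union>(snd ` set (F @ [G])) = \<Union>(snd ` set F)"
    using assms(2) by auto
  with coh obtain \<omega> where "\<omega> \<in> \<Union>(snd ` set F)"
      "gain (F @ [G]) (p @ [c]) (\<lambda>i. if i < length F then s i else 0) \<omega> \<le> 0"
    unfolding coherent_iff_nonpositive_gain by metis
  with gain_append[OF len] show "\<exists>\<omega>\<in>\<Union>(snd ` set F). gain F p s \<omega> \<le> 0"
    by auto
qed

text \<open>Without the covering hypothesis a bet on the i-th event alone says nothing: its
  gain vanishes on H_0 outside H_i.\<close>

lemma coherent_nth_bounds:
  assumes coh: "coherent F p" and "i < length F" and "\<Union>(snd ` set F) \<subseteq> snd (F ! i)"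
  shows "0 \<le> p ! i" "p ! i \<le> 1"
proof -
  have "\<exists>\<omega>\<in>snd (F ! i). c * (indicator (fst (F ! i)) \<omega> - p ! i) \<le> 0" for c
  proof -
    from coh obtain \<omega> where "\<omega> \<in> \<Union>(snd ` set F)"
        and gain_le: "gain F p (\<lambda>j. if j = i then c else 0) \<omega> \<le> 0"
      unfolding coherent_iff_nonpositive_gain by blast
    with assms(3) have "\<omega> \<in> snd (F ! i)"
      by blast
    with gain_le assms(2) show ?thesis
      by (auto simp: gain_single_stake)
  qed
  from this[of 1] this[of "-1"] show "0 \<le> p ! i" "p ! i \<le> 1"
    by (auto simp: indicator_def of_bool_def split: if_splits)
qed

lemma logically_independent_world:
  assumes "logically_independent [A, H, B, K]"
  obtains \<omega> where "\<omega> \<in> A \<longleftrightarrow> a" "\<omega> \<in> H \<longleftrightarrow> h" "\<omega> \<in> B \<longleftrightarrow> b" "\<omega> \<in> K \<longleftrightarrow> k"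
proof -
  have "length [a, h, b, k] = length [A, H, B, K]"
    by simp
  with assms obtain \<omega>
    where \<omega>: "\<forall>i<length [A, H, B, K]. \<omega> \<in> [A, H, B, K] ! i \<longleftrightarrow> [a, h, b, k] ! i"
    unfolding logically_independent_def by blast
  show ?thesis
    using \<omega>[rule_format, of 0] \<omega>[rule_format, of 1] \<omega>[rule_format, of 2] \<omega>[rule_format, of 3]
    by (intro that) (simp_all add: numeral_2_eq_2 numeral_3_eq_3)
qed

lemma gain_quasi_disj:
  "gain [(A, H), (B, K), quasi_disj (A, H) (B, K)] [x, y, z] s \<omega> =
     s 0 * indicator H \<omega> * (indicator A \<omega> - x) + s 1 * indicator K \<omega> * (indicator B \<omega> - y)
     + s 2 * indicator (H \<union> K) \<omega> * (indicator (A \<inter> H \<union> B \<inter> K) \<omega> - z)"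
  by (simp add: gain_Cons gain_Nil quasi_disj_def numeral_2_eq_2)

lemma T0H_denominator_pos:
  fixes x y :: real
  assumes "x \<in> {0..1}" "y \<in> {0..1}" "\<not> (x = 0 \<and> y = 0)"
  shows "0 < x + y - x * y"
proof -
  have "x * y \<le> y"
    using assms(1,2) mult_left_le_one_le[of y x] by simp
  with assms show ?thesis
    by (cases "x = 0") auto
qed

lemma coherent_quasi_disj_SL:
  assumes indep: "logically_independent [A, H, B, K]" and "x \<in> {0..1}" "y \<in> {0..1}"
  shows "coherent [(A, H), (B, K), quasi_disj (A, H) (B, K)] [x, y, SL x y]"
proof -
  obtain w11 where w11: "w11 \<in> A" "w11 \<in> H" "w11 \<in> B" "w11 \<in> K"
    using logically_independent_world[OF indep, of True True True True] by metis
  obtain w10 where w10: "w10 \<in> A" "w10 \<in> H" "w10 \<notin> B" "w10 \<in> K"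
    using logically_independent_world[OF indep, of True True False True] by metis
  obtain w01 where w01: "w01 \<notin> A" "w01 \<in> H" "w01 \<in> B" "w01 \<in> K"
    using logically_independent_world[OF indep, of False True True True] by metis
  obtain w00 where w00: "w00 \<notin> A" "w00 \<in> H" "w00 \<notin> B" "w00 \<in> K"
    using logically_independent_world[OF indep, of False True False True] by metis
  show ?thesis
  proof (cases "x + y \<le> 1")
    case True
    \<comment> \<open>AH and BK are disjoint for this weighting, so D gets weight x + y.\<close>
    show ?thesis
      using True assms(2,3) w10 w01 w00
      by (intro coherentI_weighted[where I = "{..<3}" and q = "(!) [x, y, 1 - x - y]"
            and \<omega> = "(!) [w10, w01, w00]"])
        (auto simp: less_Suc_eq eval_nat_numeral lessThan_Suc quasi_disj_def SL_def)
  next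
    case False
    \<comment> \<open>AH \<union> BK covers all worlds of positive weight.\<close>
    show ?thesis
      using False assms(2,3) w11 w10 w01
      by (intro coherentI_weighted[where I = "{..<3}" and q = "(!) [x + y - 1, 1 - y, 1 - x]"
            and \<omega> = "(!) [w11, w10, w01]"])
        (auto simp: less_Suc_eq eval_nat_numeral lessThan_Suc quasi_disj_def SL_def)
  qed
qed

lemma coherent_quasi_disj_T0H:
  assumes indep: "logically_independent [A, H, B, K]" and "x \<in> {0..1}" "y \<in> {0..1}"
  shows "coherent [(A, H), (B, K), quasi_disj (A, H) (B, K)] [x, y, T0H x y]"
proof (cases "x = 0 \<and> y = 0")
  case True
  then have "T0H x y = SL x y"
    by (simp add: T0H_def SL_def)
  with coherent_quasi_disj_SL[OF assms] show ?thesis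
    by simp
next
  case False
  obtain w11 where w11: "w11 \<in> A" "w11 \<in> H" "w11 \<in> B" "w11 \<in> K"
    using logically_independent_world[OF indep, of True True True True] by metis
  obtain wH where wH: "wH \<notin> A" "wH \<in> H" "wH \<notin> B" "wH \<notin> K"
    using logically_independent_world[OF indep, of False True False False] by metis
  obtain wK where wK: "wK \<notin> A" "wK \<notin> H" "wK \<notin> B" "wK \<in> K"
    using logically_independent_world[OF indep, of False False False True] by metis
  have total: "y * (1 - x) + x * (1 - y) + x * y = x + y - x * y"
    by (simp add: algebra_simps)
  have "0 < x + y - x * y"
    using T0H_denominator_pos[OF assms(2,3) False] .
  then have "0 < y * (1 - x) + x * (1 - y) + x * y"
    and "T0H x y * (y * (1 - x) + x * (1 - y) + x * y) = x * y"
    unfolding total by (simp_all add: T0H_def False)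
  \<comment> \<open>Under H alone and K alone the quasi disjunction fails; it holds only at w11.\<close>
  with assms(2,3) w11 wH wK mult_left_le_one_le[of y x] mult_left_le[of y x] show ?thesis
    by (intro coherentI_weighted[where I = "{..<3}" and q = "(!) [y * (1 - x), x * (1 - y), x * y]"
          and \<omega> = "(!) [wH, wK, w11]"])
      (auto simp: less_Suc_eq eval_nat_numeral lessThan_Suc quasi_disj_def algebra_simps)
qed

lemma conditioning_union_quasi_disj:
  "\<Union>(snd ` set [(A, H), (B, K), quasi_disj (A, H) (B, K)]) = H \<union> K"
  by (auto simp: quasi_disj_def)

lemma coherent_quasi_disj_le_SL:
  fixes x y z :: real
  assumes coh: "coherent [(A, H), (B, K), quasi_disj (A, H) (B, K)] [x, y, z]"
    and "0 \<le> x" "0 \<le> y"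
  shows "z \<le> SL x y"
proof -
  have "z \<le> 1"
    using coherent_nth_bounds(2)[OF coh, of 2] by (auto simp: quasi_disj_def)
  moreover obtain \<omega> where "\<omega> \<in> H \<union> K"
      and "gain [(A, H), (B, K), quasi_disj (A, H) (B, K)] [x, y, z]
             (\<lambda>i. if i = 2 then -1 else 1) \<omega> \<le> 0"
    using coh unfolding coherent_iff_nonpositive_gain conditioning_union_quasi_disj by blast
  then have "z \<le> x + y"
    using assms(2,3)
    by (cases "\<omega> \<in> A"; cases "\<omega> \<in> H"; cases "\<omega> \<in> B"; cases "\<omega> \<in> K")
      (simp_all add: gain_quasi_disj)
  ultimately show ?thesis
    by (simp add: SL_def)
qed

lemma coherent_quasi_disj_ge_T0H:
  fixes x y z :: real
  assumes coh: "coherent [(A, H), (B, K), quasi_disj (A, H) (B, K)] [x, y, z]"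
    and "x \<in> {0..1}" "y \<in> {0..1}"
  shows "T0H x y \<le> z"
proof (cases "x = 0 \<and> y = 0")
  case True
  with coherent_nth_bounds(1)[OF coh, of 2] show ?thesis
    by (auto simp: quasi_disj_def T0H_def)
next
  case False
  define d where "d = x + y - x * y"
  have "0 \<le> x * y" "x * y \<le> x" "x * y \<le> y"
    using assms(2,3) mult_left_le_one_le[of y x] mult_left_le[of y x] by auto
  obtain \<omega> where "\<omega> \<in> H \<union> K"
      and "gain [(A, H), (B, K), quasi_disj (A, H) (B, K)] [x, y, z]
             (\<lambda>i. if i = 0 then - y else if i = 1 then - x else d) \<omega> \<le> 0"
    using coh unfolding coherent_iff_nonpositive_gain conditioning_union_quasi_disj by blast
  then have "x * y \<le> d * z"
    using \<open>0 \<le> x * y\<close> \<open>x * y \<le> x\<close> \<open>x * y \<le> y\<close>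
    by (cases "\<omega> \<in> A"; cases "\<omega> \<in> H"; cases "\<omega> \<in> B"; cases "\<omega> \<in> K")
      (simp_all add: gain_quasi_disj d_def algebra_simps)
  with T0H_denominator_pos[OF assms(2,3) False] show ?thesis
    by (simp add: T0H_def False d_def pos_divide_le_eq mult.commute)
qed

lemma coherent_quasi_disj_iff:
  assumes "logically_independent [A, H, B, K]" and xy: "x \<in> {0..1}" "y \<in> {0..1}"
  shows "coherent [(A, H), (B, K), quasi_disj (A, H) (B, K)] [x, y, z] \<longleftrightarrow> z \<in> {T0H x y .. SL x y}"
    (is "coherent ?F _ \<longleftrightarrow> _")
proof
  assume coh: "coherent ?F [x, y, z]"
  with xy show "z \<in> {T0H x y .. SL x y}"
    using coherent_quasi_disj_ge_T0H[OF coh] coherent_quasi_disj_le_SL[OF coh] by simp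
next
  assume z: "z \<in> {T0H x y .. SL x y}"
  have lower: "coherent ?F ([x, y, z][2 := T0H x y])"
    and upper: "coherent ?F ([x, y, z][2 := SL x y])"
    using coherent_quasi_disj_T0H[OF assms] coherent_quasi_disj_SL[OF assms]
    by (simp_all add: numeral_2_eq_2)
  from z have "coherent ?F ([x, y, z][2 := z])"
    by (intro coherent_list_update_between[OF lower upper]) simp_all
  then show "coherent ?F [x, y, z]"
    by (simp add: numeral_2_eq_2)
qed

theorem proposition2:
  fixes A H B K :: "'w set"
  assumes "logically_independent [A, H, B, K]"
  shows "(\<forall>x y. x \<in> {0..1} \<and> y \<in> {0..1} \<longrightarrow> coherent [(A, H), (B, K)] [x, y])
       \<and> (\<forall>x y z. x \<in> {0..1} \<and> y \<in> {0..1} \<longrightarrow>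
            (coherent [(A, H), (B, K), quasi_disj (A, H) (B, K)] [x, y, z]
               \<longleftrightarrow> z \<in> {T0H x y .. SL x y}))"
proof (intro conjI allI impI)
  fix x y :: real
  assume "x \<in> {0..1} \<and> y \<in> {0..1}"
  then have "coherent ([(A, H), (B, K)] @ [quasi_disj (A, H) (B, K)]) ([x, y] @ [SL x y])"
    using coherent_quasi_disj_SL[OF assms] by simp
  then show "coherent [(A, H), (B, K)] [x, y]"
    by (rule coherent_append_covered) (auto simp: quasi_disj_def)
qed (use coherent_quasi_disj_iff[OF assms] in blast)

end
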